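(* Let $R$ be a finite commutative unital ring, $N\ge2$ with $N\in R^{\times}$, and $q\in R$ a root of the $N$-th cyclotomic polynomial over $\mathbb{Z}$. Let $u,u'\in R^{\times}$ and $a,a'\in R$. If $\mathrm{Id}_{H_N^q}(\mathcal{B}_{(u,a)})=\mathrm{Id}_{H_N^q}(\mathcal{B}_{(u',a')})$, then there exists $s\in R^{\times}$ such that $u'=s^Nu$.
   Context: $H_N^q$ is the Taft Hopf algebra over $R$: generated by $g,x$ with $g^N=1$, $x^N=0$, $xg=qgx$, $\Delta(g)=g\otimes g$, $\Delta(x)=1\otimes x+x\otimes g$, $\varepsilon(g)=1$, $\varepsilon(x)=0$, free over $R$ with basis $\{g^mx^n:0\le m,n<N\}$. For $u\in R^{\times},a\in R$, $\mathcal{B}_{(u,a)}$ is the $R$-algebra generated by $v_g,v_x$ with $v_g^N=u$, $v_x^N=a$, $v_xv_g=qv_gv_x$, a right $H_N^q$-comodule algebra via $v_g\mapsto v_g\otimes g$, $v_x\mapsto1\otimes x+v_x\otimes g$. Let $Z_i^H$ ($i\ge1$) be copies $\{Z_i^h:h\in H_N^q\}$ of the $R$-module $H_N^q$ and $T=T(\bigoplus_iZ_i^H)$ the tensor algebra with coaction $\delta(Z_i^h)=\sum Z_i^{h_1}\otimes h_2$. $P\in T$ is a polynomial $H_N^q$-identity for a right $H_N^q$-comodule algebra $B$ if $f(P)=0$ for all right $H_N^q$-comodule algebra maps $f:T\to B$; $\mathrm{Id}_{H_N^q}(B)$ is the set of these. *)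

theory Defs
  imports Complex_Main "HOL-Computational_Algebra.Polynomial"
begin

definition cyclotomic_poly :: "nat \<Rightarrow> int poly" where
  "cyclotomic_poly N = (THE p. map_poly of_int p =
      (\<Prod>k\<in>{k. k < N \<and> coprime k N}. [:- cis (2 * pi * real k / real N), 1:]))"

text \<open>Elements are coordinate functions on the basis index set box N; the basis element
  indexed (m,n) stands for g^m x^n (in H) resp. v_g^m v_x^n (in B). Coordinates outside
  box N are zero.\<close>
definition box :: "nat \<Rightarrow> (nat \<times> nat) set" where
  "box N = {..<N} \<times> {..<N}"

definition bvec :: "nat \<Rightarrow> (nat \<times> nat \<Rightarrow> 'a::zero) set" where
  "bvec N = {v. \<forall>k. k \<notin> box N \<longrightarrow> v k = 0}"

definition bas :: "nat \<times> nat \<Rightarrow> nat \<times> nat \<Rightarrow> 'a::{zero,one}" where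
  "bas k = (\<lambda>k'. if k' = k then 1 else 0)"

text \<open>Structure constants of the algebra generated by v_g, v_x with v_g^N = u, v_x^N = a,
  v_x v_g = q v_g v_x:
  (v_g^m1 v_x^n1)(v_g^m2 v_x^n2) = q^(n1 m2) v_g^(m1+m2) v_x^(n1+n2), then reduce.
  The Taft algebra H_N^q is the case u = 1, a = 0 (g = v_g, x = v_x).\<close>
definition mtab :: "nat \<Rightarrow> 'a::comm_ring_1 \<Rightarrow> 'a \<Rightarrow> 'a \<Rightarrow>
    nat \<times> nat \<Rightarrow> nat \<times> nat \<Rightarrow> nat \<times> nat \<Rightarrow> 'a" where
  "mtab N q u a i j k =
     (if k = ((fst i + fst j) mod N, (snd i + snd j) mod N)
      then q ^ (snd i * fst j) * (if N \<le> fst i + fst j then u else 1)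
             * (if N \<le> snd i + snd j then a else 1)
      else 0)"

definition bmult :: "nat \<Rightarrow> 'a::comm_ring_1 \<Rightarrow> 'a \<Rightarrow> 'a \<Rightarrow>
    (nat \<times> nat \<Rightarrow> 'a) \<Rightarrow> (nat \<times> nat \<Rightarrow> 'a) \<Rightarrow> (nat \<times> nat \<Rightarrow> 'a)" where
  "bmult N q u a x y = (\<lambda>k. if k \<in> box N then
      (\<Sum>i\<in>box N. \<Sum>j\<in>box N. x i * y j * mtab N q u a i j k) else 0)"

definition bunit :: "nat \<times> nat \<Rightarrow> 'a::comm_ring_1" where
  "bunit = bas (0, 0)"

definition tmult :: "nat \<Rightarrow> 'a::comm_ring_1 \<Rightarrow> 'a \<Rightarrow> 'a \<Rightarrow>
    ((nat \<times> nat) \<times> (nat \<times> nat) \<Rightarrow> 'a) \<Rightarrow> ((nat \<times> nat) \<times> (nat \<times> nat) \<Rightarrow> 'a)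
    \<Rightarrow> ((nat \<times> nat) \<times> (nat \<times> nat) \<Rightarrow> 'a)" where
  "tmult N q u a x y = (\<lambda>(k1, k2). if k1 \<in> box N \<and> k2 \<in> box N then
      (\<Sum>i\<in>box N \<times> box N. \<Sum>j\<in>box N \<times> box N.
          x i * y j * mtab N q u a (fst i) (fst j) k1 * mtab N q 1 0 (snd i) (snd j) k2)
      else 0)"

definition tunit :: "(nat \<times> nat) \<times> (nat \<times> nat) \<Rightarrow> 'a::comm_ring_1" where
  "tunit = (\<lambda>k. if k = ((0, 0), (0, 0)) then 1 else 0)"

definition tens :: "(nat \<times> nat \<Rightarrow> 'a::comm_ring_1) \<Rightarrow> (nat \<times> nat \<Rightarrow> 'a)
    \<Rightarrow> ((nat \<times> nat) \<times> (nat \<times> nat) \<Rightarrow> 'a)" where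
  "tens v w = (\<lambda>(k1, k2). v k1 * w k2)"

definition tpow :: "nat \<Rightarrow> 'a::comm_ring_1 \<Rightarrow> 'a \<Rightarrow> 'a \<Rightarrow>
    ((nat \<times> nat) \<times> (nat \<times> nat) \<Rightarrow> 'a) \<Rightarrow> nat \<Rightarrow> ((nat \<times> nat) \<times> (nat \<times> nat) \<Rightarrow> 'a)" where
  "tpow N q u a x n = ((tmult N q u a x) ^^ n) tunit"

text \<open>rho is the algebra map with rho(v_g) = v_g (x) g, rho(v_x) = 1 (x) x + v_x (x) g,
  so rho(v_g^m v_x^n) = rho(v_g)^m rho(v_x)^n, extended R-linearly.
  For u = 1, a = 0 this is the comultiplication Delta of H_N^q.\<close>
definition rho :: "nat \<Rightarrow> 'a::comm_ring_1 \<Rightarrow> 'a \<Rightarrow> 'a \<Rightarrow>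
    (nat \<times> nat \<Rightarrow> 'a) \<Rightarrow> ((nat \<times> nat) \<times> (nat \<times> nat) \<Rightarrow> 'a)" where
  "rho N q u a b = (\<lambda>k. \<Sum>m\<in>box N. b m *
      tmult N q u a
        (tpow N q u a (tens (bas (1, 0)) (bas (1, 0))) (fst m))
        (tpow N q u a (\<lambda>k'. tens (bas (0, 0)) (bas (0, 1)) k' + tens (bas (0, 1)) (bas (1, 0)) k')
           (snd m)) k)"

definition Delta :: "nat \<Rightarrow> 'a::comm_ring_1 \<Rightarrow>
    (nat \<times> nat \<Rightarrow> 'a) \<Rightarrow> ((nat \<times> nat) \<times> (nat \<times> nat) \<Rightarrow> 'a)" where
  "Delta N q = rho N q 1 0"

text \<open>T = T(direct sum of Z_i^H, i >= 1) is the free noncommutative R-algebra on the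
  variables Z_i^{g^m x^n} (i >= 1, (m,n) in box N), since H is free on that basis.\<close>
definition tpoly :: "nat \<Rightarrow> ((nat \<times> (nat \<times> nat)) list \<Rightarrow> 'a::comm_ring_1) set" where
  "tpoly N = {P. finite {w. P w \<noteq> 0} \<and>
      (\<forall>w. P w \<noteq> 0 \<longrightarrow> (\<forall>l\<in>set w. 1 \<le> fst l \<and> snd l \<in> box N))}"

text \<open>An algebra map f : T -> B is determined by phi i h = f(Z_i^h) on basis elements h;
  it is a map of right H-comodules iff each R-linear map h |-> f(Z_i^h) is colinear,
  i.e. rho(f(Z_i^h)) = sum f(Z_i^{h_1}) (x) h_2.\<close>
definition comod_alg_maps :: "nat \<Rightarrow> 'a::comm_ring_1 \<Rightarrow> 'a \<Rightarrow> 'a \<Rightarrow>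
    (nat \<Rightarrow> nat \<times> nat \<Rightarrow> nat \<times> nat \<Rightarrow> 'a) set" where
  "comod_alg_maps N q u a = {phi. \<forall>i\<ge>1. \<forall>h\<in>box N. phi i h \<in> bvec N \<and>
      rho N q u a (phi i h) =
        (\<lambda>(k1, k2). \<Sum>j\<in>box N. Delta N q (bas h) (j, k2) * phi i j k1)}"

definition teval :: "nat \<Rightarrow> 'a::comm_ring_1 \<Rightarrow> 'a \<Rightarrow> 'a \<Rightarrow>
    (nat \<Rightarrow> nat \<times> nat \<Rightarrow> nat \<times> nat \<Rightarrow> 'a) \<Rightarrow>
    ((nat \<times> (nat \<times> nat)) list \<Rightarrow> 'a) \<Rightarrow> (nat \<times> nat \<Rightarrow> 'a)" where
  "teval N q u a phi P = (\<lambda>k. \<Sum>w\<in>{w. P w \<noteq> 0}.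
      P w * foldr (\<lambda>l acc. bmult N q u a (phi (fst l) (snd l)) acc) w bunit k)"

definition poly_H_identities :: "nat \<Rightarrow> 'a::comm_ring_1 \<Rightarrow> 'a \<Rightarrow> 'a \<Rightarrow>
    ((nat \<times> (nat \<times> nat)) list \<Rightarrow> 'a) set" where
  "poly_H_identities N q u a = {P \<in> tpoly N. \<forall>phi\<in>comod_alg_maps N q u a.
      teval N q u a phi P = (\<lambda>_. 0)}"

end

theory Submission
  imports Defs
begin

text \<open>Let Q(X) be the product of X - r^N u over all r in R. A colinear map sends Z_1^g to a
  scalar multiple c v_g (the coefficient of v_g^m (x) g^m x^n in rho(b) is the coefficient of
  v_g^m v_x^n in b, while colinearity forces the second tensor factor of rho(phi(Z_1^g)) to be g),
  and (c v_g)^N = c^N u. Hence Q((Z_1^g)^N) is an identity of B_(u,a), so of B_(u',a'), and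
  evaluating it at the identification Z_i^h |-> v^h gives Q(u') = 0.

  It remains to see that a unit c with prod_r (c - r^N d) = 0 lies in (R^x)^N d when N is a unit.
  Each factor c - r^N d splits R, via an idempotent power, into a part where it is a unit and a
  part where it is nilpotent; gluing the local solutions r along these idempotents yields s with
  c - s^N d nilpotent. Then c / (s^N d) is unipotent, and unipotents are N-th powers because
  y |-> y^N is injective, hence bijective, on the finite group of unipotents.\<close>

section \<open>Nilpotents and N-th powers in finite commutative rings\<close>

definition nilpotent :: "'a::comm_ring_1 \<Rightarrow> bool" where
  "nilpotent x \<longleftrightarrow> (\<exists>k. x ^ k = 0)"

lemma nilpotent_0 [simp]: "nilpotent 0"
  unfolding nilpotent_def by (metis power_one_right)

lemma nilpotent_mult_left: "nilpotent x \<Longrightarrow> nilpotent (y * x)"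
  unfolding nilpotent_def by (metis mult_zero_right power_mult_distrib)

lemma nilpotent_mult_right: "nilpotent x \<Longrightarrow> nilpotent (x * y)"
  using nilpotent_mult_left by (metis mult.commute)

lemma nilpotent_add:
  assumes "nilpotent x" "nilpotent y"
  shows "nilpotent (x + y)"
proof -
  obtain k l where k: "x ^ k = 0" and l: "y ^ l = 0"
    using assms unfolding nilpotent_def by blast
  have "of_nat ((k + l) choose i) * x ^ i * y ^ (k + l - i) = 0" for i
  proof (cases "k \<le> i")
    case True
    then have "x ^ i = x ^ k * x ^ (i - k)" by (simp flip: power_add)
    then show ?thesis using k by simp
  next
    case False
    then have "k + l - i = l + (k - i)" by simp
    then have "y ^ (k + l - i) = y ^ l * y ^ (k - i)" by (simp add: power_add)
    then show ?thesis using l by simp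
  qed
  then have "(x + y) ^ (k + l) = 0" by (simp add: binomial_ring)
  then show ?thesis unfolding nilpotent_def by blast
qed

lemma nilpotent_sum: "(\<And>i. i \<in> A \<Longrightarrow> nilpotent (f i)) \<Longrightarrow> nilpotent (sum f A)"
  by (induction A rule: infinite_finite_induct) (auto intro: nilpotent_add)

lemma unit_add_nilpotent:
  assumes "c dvd 1" "nilpotent n"
  shows "(c + n) dvd 1"
proof -
  obtain c' where c': "c * c' = 1" using assms(1) by (metis dvdE)
  obtain k where k: "(- (c' * n)) ^ k = 0"
    using nilpotent_mult_left[OF assms(2), of "- c'"] unfolding nilpotent_def by auto
  have "1 = (1 + c' * n) * (\<Sum>i<k. (- (c' * n)) ^ i)"
    using one_diff_power_eq[of "- (c' * n)" k] k by simp
  then have "(1 + c' * n) dvd 1" by (metis dvd_triv_left)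
  moreover have "c + n = c * (1 + c' * n)"
    using c' by (simp add: distrib_left flip: mult.assoc)
  ultimately show ?thesis using mult_dvd_mono[OF assms(1)] by fastforce
qed

lemma unipotent_mult:
  assumes "nilpotent (y - 1)" "nilpotent (w - 1)"
  shows "nilpotent (y * w - 1)"
proof -
  have "y * w - 1 = (y - 1) * w + (w - 1)" by (simp add: algebra_simps)
  then show ?thesis using assms by (metis nilpotent_add nilpotent_mult_right)
qed

lemma unipotent_power: "nilpotent (y - 1) \<Longrightarrow> nilpotent (y ^ n - 1)"
  unfolding power_diff_1_eq by (rule nilpotent_mult_right)

lemma unipotent_unit: "nilpotent (y - 1) \<Longrightarrow> y dvd 1"
  using unit_add_nilpotent[of 1 "y - 1"] by simp

lemma unipotent_power_inj:
  fixes y w :: "'a::comm_ring_1"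
  assumes N: "(of_nat N :: 'a) dvd 1" and y: "nilpotent (y - 1)" and w: "nilpotent (w - 1)"
    and eq: "y ^ N = w ^ N"
  shows "y = w"
proof -
  define t where "t i = w ^ (N - Suc i) * y ^ i" for i
  have "nilpotent (t i - 1)" for i
    unfolding t_def using w y by (intro unipotent_mult unipotent_power)
  then have "(of_nat N + (\<Sum>i<N. t i - 1)) dvd 1"
    by (intro unit_add_nilpotent[OF N] nilpotent_sum)
  also have "of_nat N + (\<Sum>i<N. t i - 1) = (\<Sum>i<N. t i)"
    by (simp add: sum_subtractf)
  finally obtain s where s: "(\<Sum>i<N. t i) * s = 1" by (metis dvdE)
  have "(y - w) * (\<Sum>i<N. t i) = 0"
    using eq power_diff_sumr2[of y N w] by (simp add: t_def)
  then have "y - w = 0" using s by (metis mult.assoc mult_1_right mult_zero_left)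
  then show ?thesis by simp
qed

lemma unipotent_nth_root:
  fixes z :: "'a::{comm_ring_1,finite}"
  assumes "(of_nat N :: 'a) dvd 1" "nilpotent z"
  shows "\<exists>y. y dvd 1 \<and> y ^ N = 1 + z"
proof -
  let ?U = "{y::'a. nilpotent (y - 1)}"
  have "inj_on (\<lambda>y. y ^ N) ?U"
    using unipotent_power_inj[OF assms(1)] unfolding inj_on_def by blast
  moreover have "(\<lambda>y. y ^ N) ` ?U \<subseteq> ?U"
    using unipotent_power by blast
  ultimately have "(\<lambda>y. y ^ N) ` ?U = ?U" by (simp add: endo_inj_surj)
  moreover have "1 + z \<in> ?U" using assms(2) by simp
  ultimately obtain y where "nilpotent (y - 1)" "y ^ N = 1 + z" by (metis (no_types, lifting) imageE mem_Collect_eq)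
  then show ?thesis using unipotent_unit by blast
qed

lemma power_idempotent_combination:
  fixes x y e :: "'a::comm_ring_1"
  assumes "e * e = e"
  shows "(y * (1 - e) + x * e) ^ n = y ^ n * (1 - e) + x ^ n * e"
proof (induction n)
  case 0
  then show ?case by simp
next
  case (Suc n)
  have "(y * (1 - e) + x * e) ^ Suc n = (y * (1 - e) + x * e) * (y ^ n * (1 - e) + x ^ n * e)"
    using Suc by simp
  also have "\<dots> = y ^ Suc n * ((1 - e) * (1 - e)) + x ^ Suc n * (e * e)
      + (x * y ^ n + y * x ^ n) * (e - e * e)"
    by (simp add: algebra_simps)
  also have "\<dots> = y ^ Suc n * (1 - e) + x ^ Suc n * e"
    using assms by (simp add: algebra_simps)
  finally show ?case .
qed

text \<open>Fitting's lemma for multiplication by x.\<close>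
lemma finite_ring_idempotent_power:
  fixes x :: "'a::{comm_ring_1,finite}"
  obtains M where "M \<ge> 1" "x ^ M * x ^ M = x ^ M" "nilpotent (x * (1 - x ^ M))"
proof -
  have "\<not> inj (\<lambda>n::nat. x ^ n)"
    using finite_imageD[of "\<lambda>n::nat. x ^ n" UNIV] infinite_UNIV_nat by (metis finite)
  then obtain i j where "i < j" "x ^ i = x ^ j"
    unfolding inj_def by (metis linorder_neqE_nat)
  define d where "d = j - i"
  have d: "d \<ge> 1" "x ^ (i + d) = x ^ i"
    using \<open>i < j\<close> \<open>x ^ i = x ^ j\<close> by (simp_all add: d_def)
  have periodic: "x ^ (n + t * d) = x ^ n" if "i \<le> n" for n t
  proof (induction t)
    case 0
    then show ?case by simp
  next
    case (Suc t)
    have "n + Suc t * d = (n - i) + (i + d) + t * d"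
      using that by simp
    then have "x ^ (n + Suc t * d) = x ^ (n - i) * x ^ (i + d) * x ^ (t * d)"
      by (simp only: power_add)
    also have "\<dots> = x ^ (n + t * d)"
      using that by (simp add: d(2) flip: power_add)
    finally show ?case using Suc by simp
  qed
  define M where "M = (i + 1) * d"
  have "i \<le> i * d" using mult_le_mono2[OF d(1), of i] by simp
  moreover have "M = d + i * d" by (simp add: M_def)
  ultimately have M: "M \<ge> 1" "M \<ge> i"
    using d(1) by linarith+
  have idem: "x ^ M * x ^ M = x ^ M"
    using periodic[OF M(2), of "i + 1"] by (simp add: M_def flip: power_add)
  have "(x * (1 - x ^ M)) ^ M = x ^ M * (1 - x ^ M) ^ Suc (M - 1)"
    using M(1) by (simp add: power_mult_distrib)
  also have "\<dots> = x ^ M * (1 - x ^ M) * (1 - x ^ M) ^ (M - 1)"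
    by (simp only: power_Suc mult.assoc)
  also have "x ^ M * (1 - x ^ M) = 0"
    using idem by (simp add: algebra_simps)
  finally have "nilpotent (x * (1 - x ^ M))"
    unfolding nilpotent_def by auto
  with M(1) idem show thesis by (rule that)
qed

text \<open>Gluing along idempotents: this is where the finite ring is treated as the product of
  its local factors.\<close>
lemma idempotent_patching:
  fixes c d :: "'a::comm_ring_1"
  assumes "finite A" and idem: "\<And>r. E r * E r = E r"
    and nil: "\<And>r. nilpotent ((c - r ^ N * d) * (1 - E r))"
  shows "\<exists>s. nilpotent ((c - s ^ N * d) * (1 - (\<Prod>r\<in>A. E r)))"
  using assms(1)
proof (induction A rule: finite_induct)
  case empty
  then show ?case by simp
next
  case (insert r A)
  then obtain s where s: "nilpotent ((c - s ^ N * d) * (1 - (\<Prod>r\<in>A. E r)))" by blast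
  define F where "F = (\<Prod>r\<in>A. E r)"
  define e where "e = E r"
  have e: "e * e = e" using idem by (simp add: e_def)
  have "(c - (x * (1 - e) + y * e) * d) * (1 - e * F)
      = (c - x * d) * (1 - e) + e * ((c - y * d) * (1 - F)) + (y - x) * d * F * (e * e - e)"
    for x y
    by (simp add: algebra_simps)
  then have "(c - (r * (1 - e) + s * e) ^ N * d) * (1 - e * F)
      = (c - r ^ N * d) * (1 - e) + e * ((c - s ^ N * d) * (1 - F))"
    unfolding power_idempotent_combination[OF e] using e by simp
  moreover have "nilpotent ((c - r ^ N * d) * (1 - e) + e * ((c - s ^ N * d) * (1 - F)))"
    using nil[of r] nilpotent_mult_left[OF s, of e]
    unfolding e_def F_def by (intro nilpotent_add)
  ultimately show ?case
    using insert(1,2) unfolding F_def e_def by (metis prod.insert)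
qed

lemma nth_power_coset_lift:
  fixes c d s :: "'a::{comm_ring_1,finite}"
  assumes N: "(of_nat N :: 'a) dvd 1" and "c dvd 1" and nil: "nilpotent (c - s ^ N * d)"
  shows "\<exists>t. t dvd 1 \<and> c = t ^ N * d"
proof -
  define n where "n = c - s ^ N * d"
  have "nilpotent (- n)"
    using nilpotent_mult_left[OF nil, of "- 1"] by (simp add: n_def)
  from unit_add_nilpotent[OF \<open>c dvd 1\<close> this] have unit: "(s ^ N * d) dvd 1"
    by (simp add: n_def)
  then obtain v where v: "s ^ N * d * v = 1" by (metis dvdE)
  have "N \<noteq> 0" using N by (auto intro: ccontr)
  then have "s dvd 1" using unit by (metis dvd_mult_left dvd_power dvd_trans neq0_conv)
  have "nilpotent (v * n)"
    using nilpotent_mult_left[OF nil] by (simp add: n_def)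
  then obtain y where y: "y dvd 1" "y ^ N = 1 + v * n"
    using unipotent_nth_root[OF N] by blast
  have "(s * y) ^ N * d = s ^ N * d + (s ^ N * d * v) * n"
    by (simp add: power_mult_distrib y(2) algebra_simps)
  also have "\<dots> = c" by (simp add: v n_def)
  finally show ?thesis using \<open>s dvd 1\<close> y(1) by (metis mult_dvd_mono mult_1_right)
qed

theorem nth_power_coset_if_prod_vanishes:
  fixes c d :: "'a::{comm_ring_1,finite}"
  assumes N: "(of_nat N :: 'a) dvd 1" and c: "c dvd 1"
    and prod: "(\<Prod>r\<in>UNIV. c - r ^ N * d) = 0"
  shows "\<exists>s. s dvd 1 \<and> c = s ^ N * d"
proof -
  define x where "x r = c - r ^ N * d" for r
  have "\<exists>M. M \<ge> 1 \<and> x r ^ M * x r ^ M = x r ^ M \<and> nilpotent (x r * (1 - x r ^ M))" for r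
    using finite_ring_idempotent_power by blast
  then obtain M where M: "\<And>r. M r \<ge> 1" "\<And>r. x r ^ M r * x r ^ M r = x r ^ M r"
    "\<And>r. nilpotent (x r * (1 - x r ^ M r))"
    by metis
  have "nilpotent ((c - r ^ N * d) * (1 - x r ^ M r))" for r
    using M(3) by (simp add: x_def)
  from idempotent_patching[OF finite_UNIV M(2) this]
  obtain s where s: "nilpotent ((c - s ^ N * d) * (1 - (\<Prod>r\<in>UNIV. x r ^ M r)))"
    by blast
  have "x r ^ M r = x r * x r ^ (M r - 1)" for r
    using M(1)[of r] by (metis Suc_diff_le diff_Suc_1 power_Suc)
  then have "(\<Prod>r\<in>UNIV. x r ^ M r) = (\<Prod>r\<in>UNIV. x r) * (\<Prod>r\<in>UNIV. x r ^ (M r - 1))"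
    by (simp add: prod.distrib)
  also have "\<dots> = 0" using prod by (simp add: x_def)
  finally have "nilpotent (c - s ^ N * d)" using s by simp
  then show ?thesis by (rule nth_power_coset_lift[OF N c])
qed

section \<open>The coaction of H_N^q on B_(u,a)\<close>

lemma finite_box [simp]: "finite (box N)"
  by (simp add: box_def)

definition tbas :: "(nat \<times> nat) \<times> (nat \<times> nat) \<Rightarrow> (nat \<times> nat) \<times> (nat \<times> nat) \<Rightarrow> 'a::comm_ring_1"
  where "tbas p = (\<lambda>k. if k = p then 1 else 0)"

definition add_mod :: "nat \<Rightarrow> nat \<times> nat \<Rightarrow> nat \<times> nat \<Rightarrow> nat \<times> nat" where
  "add_mod N i j = ((fst i + fst j) mod N, (snd i + snd j) mod N)"

definition tadd_mod :: "nat \<Rightarrow> (nat \<times> nat) \<times> (nat \<times> nat) \<Rightarrow> (nat \<times> nat) \<times> (nat \<times> nat)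
    \<Rightarrow> (nat \<times> nat) \<times> (nat \<times> nat)" where
  "tadd_mod N i j = (add_mod N (fst i) (fst j), add_mod N (snd i) (snd j))"

lemma tens_bas: "tens (bas i) (bas j) = tbas (i, j)"
  by (auto simp: tens_def bas_def tbas_def)

lemma tunit_eq_tbas: "tunit = tbas ((0, 0), (0, 0))"
  unfolding tunit_def tbas_def ..

lemma tpow_0 [simp]: "tpow N q u a x 0 = tunit"
  unfolding tpow_def by simp

lemma tpow_Suc: "tpow N q u a x (Suc n) = tmult N q u a x (tpow N q u a x n)"
  unfolding tpow_def by simp

lemma mtab_eq_0: "k \<noteq> add_mod N i j \<Longrightarrow> mtab N q u a i j k = 0"
  unfolding mtab_def add_mod_def by simp

lemma mtab_no_wrap:
  "fst i + fst j < N \<Longrightarrow> snd i + snd j < N \<Longrightarrow>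
    mtab N q u a i j k = (if k = (fst i + fst j, snd i + snd j) then q ^ (snd i * fst j) else 0)"
  unfolding mtab_def by simp

lemma tmult_outside: "fst k \<notin> box N \<or> snd k \<notin> box N \<Longrightarrow> tmult N q u a x y k = 0"
  by (cases k) (auto simp: tmult_def)

lemma tmult_eq_sum:
  "fst k \<in> box N \<Longrightarrow> snd k \<in> box N \<Longrightarrow> tmult N q u a x y k =
    (\<Sum>i\<in>box N \<times> box N. \<Sum>j\<in>box N \<times> box N.
      x i * y j * mtab N q u a (fst i) (fst j) (fst k) * mtab N q 1 0 (snd i) (snd j) (snd k))"
  by (cases k) (simp add: tmult_def)

lemma tmult_term_nonzero:
  assumes "x i * y j * mtab N q u a (fst i) (fst j) (fst k) * mtab N q 1 0 (snd i) (snd j) (snd k) \<noteq> 0"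
  shows "x i \<noteq> 0" "y j \<noteq> 0" "k = tadd_mod N i j"
proof -
  have "fst k = add_mod N (fst i) (fst j)" "snd k = add_mod N (snd i) (snd j)"
    using assms by (metis mtab_eq_0 mult_zero_left mult_zero_right)+
  then show "k = tadd_mod N i j" by (simp add: tadd_mod_def prod_eq_iff)
  show "x i \<noteq> 0" "y j \<noteq> 0" using assms by auto
qed

lemma tmult_support:
  assumes "tmult N q u a x y k \<noteq> 0"
  shows "\<exists>i\<in>box N \<times> box N. \<exists>j\<in>box N \<times> box N. x i \<noteq> 0 \<and> y j \<noteq> 0 \<and> k = tadd_mod N i j"
proof -
  have k: "fst k \<in> box N" "snd k \<in> box N"
    using assms tmult_outside by blast+
  obtain i j where ij: "i \<in> box N \<times> box N" "j \<in> box N \<times> box N"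
    and nz: "x i * y j * mtab N q u a (fst i) (fst j) (fst k) * mtab N q 1 0 (snd i) (snd j) (snd k) \<noteq> 0"
    using assms unfolding tmult_eq_sum[OF k]
    by (metis (no_types, lifting) sum.not_neutral_contains_not_neutral)
  then show ?thesis using ij tmult_term_nonzero[of x i y j N q u a k, OF nz] by blast
qed

lemma tmult_single_term:
  assumes "k1 \<in> box N" "k2 \<in> box N"
    and ij': "(i1, i2) \<in> box N \<times> box N" "(j1, j2) \<in> box N \<times> box N"
    and unique: "\<And>i j. i \<in> box N \<times> box N \<Longrightarrow> j \<in> box N \<times> box N \<Longrightarrow> x i \<noteq> 0 \<Longrightarrow> y j \<noteq> 0 \<Longrightarrow>
      tadd_mod N i j = (k1, k2) \<Longrightarrow> i = (i1, i2) \<and> j = (j1, j2)"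
  shows "tmult N q u a x y (k1, k2) =
    x (i1, i2) * y (j1, j2) * mtab N q u a i1 j1 k1 * mtab N q 1 0 i2 j2 k2"
proof -
  define k where "k = (k1, k2)"
  define f where "f i j =
    x i * y j * mtab N q u a (fst i) (fst j) (fst k) * mtab N q 1 0 (snd i) (snd j) (snd k)" for i j
  have zero: "f i j = 0"
    if "i \<in> box N \<times> box N" "j \<in> box N \<times> box N" "\<not> (i = (i1, i2) \<and> j = (j1, j2))" for i j
  proof (rule ccontr)
    assume "f i j \<noteq> 0"
    note nz = tmult_term_nonzero[of x i y j N q u a k, OF this[unfolded f_def]]
    show False
      using unique[OF that(1,2) nz(1,2)] nz(3) that(3) by (simp add: k_def)
  qed
  then have "(\<Sum>p\<in>(box N \<times> box N) \<times> (box N \<times> box N). case_prod f p)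
      = (\<Sum>p\<in>{((i1, i2), (j1, j2))}. case_prod f p)"
  proof (intro sum.mono_neutral_right ballI)
    fix p assume "p \<in> (box N \<times> box N) \<times> (box N \<times> box N) - {((i1, i2), (j1, j2))}"
    then show "case_prod f p = 0" using zero by (cases p) simp
  qed (use ij' in simp_all)
  then have "(\<Sum>i\<in>box N \<times> box N. \<Sum>j\<in>box N \<times> box N. f i j) = f (i1, i2) (j1, j2)"
    by (simp add: sum.cartesian_product)
  then show ?thesis
    using assms(1,2) unfolding k_def f_def by (simp add: tmult_eq_sum)
qed

lemma tmult_tbas:
  assumes "a1 + a2 < N" "b1 + b2 < N" "c1 + c2 < N" "d1 + d2 < N"
  shows "tmult N q u a (tbas ((a1, b1), (c1, d1))) (tbas ((a2, b2), (c2, d2))) =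
    (\<lambda>k. q ^ (b1 * a2) * q ^ (d1 * c2) * tbas ((a1 + a2, b1 + b2), (c1 + c2, d1 + d2)) k)"
proof (rule ext)
  fix k :: "(nat \<times> nat) \<times> (nat \<times> nat)"
  obtain k1 k2 where k: "k = (k1, k2)" by (cases k)
  show "tmult N q u a (tbas ((a1, b1), (c1, d1))) (tbas ((a2, b2), (c2, d2))) k =
    q ^ (b1 * a2) * q ^ (d1 * c2) * tbas ((a1 + a2, b1 + b2), (c1 + c2, d1 + d2)) k"
  proof (cases "k1 \<in> box N \<and> k2 \<in> box N")
    case True
    have "tmult N q u a (tbas ((a1, b1), (c1, d1))) (tbas ((a2, b2), (c2, d2))) (k1, k2) =
      tbas ((a1, b1), (c1, d1)) ((a1, b1), (c1, d1)) * tbas ((a2, b2), (c2, d2)) ((a2, b2), (c2, d2))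
        * mtab N q u a (a1, b1) (a2, b2) k1 * mtab N q 1 0 (c1, d1) (c2, d2) k2"
      using True assms by (intro tmult_single_term) (auto simp: box_def tbas_def split: if_splits)
    also have "\<dots> = q ^ (b1 * a2) * q ^ (d1 * c2) * tbas ((a1 + a2, b1 + b2), (c1 + c2, d1 + d2)) (k1, k2)"
      using assms by (simp add: tbas_def mtab_no_wrap)
    finally show ?thesis unfolding k .
  next
    case False
    then show ?thesis
      using assms unfolding k by (auto simp: tmult_outside box_def tbas_def)
  qed
qed

lemma tmult_indep_no_wrap:
  assumes "\<And>i j. x i \<noteq> 0 \<Longrightarrow> y j \<noteq> 0 \<Longrightarrow>
    fst (fst i) + fst (fst j) < N \<and> snd (fst i) + snd (fst j) < N"
  shows "tmult N q u a x y = tmult N q u' a' x y"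
proof
  fix k :: "(nat \<times> nat) \<times> (nat \<times> nat)"
  have "x i * y j * mtab N q u a (fst i) (fst j) (fst k) = x i * y j * mtab N q u' a' (fst i) (fst j) (fst k)"
    for i j
    using assms[of i j] by (cases "x i = 0 \<or> y j = 0") (auto simp: mtab_no_wrap)
  then show "tmult N q u a x y k = tmult N q u' a' x y k"
    by (cases k) (simp add: tmult_def)
qed

definition rho_vg :: "(nat \<times> nat) \<times> (nat \<times> nat) \<Rightarrow> 'a::comm_ring_1" where
  "rho_vg = tens (bas (1, 0)) (bas (1, 0))"

definition rho_vx :: "(nat \<times> nat) \<times> (nat \<times> nat) \<Rightarrow> 'a::comm_ring_1" where
  "rho_vx = (\<lambda>k. tens (bas (0, 0)) (bas (0, 1)) k + tens (bas (0, 1)) (bas (1, 0)) k)"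

lemma rho_eq_tmult_tpow:
  "rho N q u a b = (\<lambda>k. \<Sum>m\<in>box N. b m *
    tmult N q u a (tpow N q u a rho_vg (fst m)) (tpow N q u a rho_vx (snd m)) k)"
  unfolding rho_def rho_vg_def rho_vx_def ..

lemma rho_vg_eq_tbas: "rho_vg = tbas ((1, 0), (1, 0))"
  unfolding rho_vg_def tens_bas ..

lemma rho_vx_nonzero: "rho_vx k \<noteq> 0 \<Longrightarrow> k = ((0, 0), (0, 1)) \<or> k = ((0, 1), (1, 0))"
  unfolding rho_vx_def tens_bas tbas_def by (auto split: if_splits)

lemma tpow_rho_vg:
  assumes "n < N"
  shows "tpow N q u a rho_vg n = tbas ((n, 0), (n, 0))"
  using assms
proof (induction n)
  case 0
  then show ?case by (simp add: tunit_eq_tbas)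
next
  case (Suc n)
  then show ?case
    by (simp add: tpow_Suc rho_vg_eq_tbas tmult_tbas)
qed

text \<open>rho(v_x)^n = (1 (x) x + v_x (x) g)^n is a combination of the monomials v_x^l (x) g^l x^(n-l).\<close>
definition vx_pow_supp :: "nat \<Rightarrow> ((nat \<times> nat) \<times> (nat \<times> nat)) set" where
  "vx_pow_supp n = {((0, l), (l, n - l)) | l. l \<le> n}"

lemma tadd_mod_vx_pow_supp:
  assumes "Suc n < N" "i = ((0, 0), (0, 1)) \<or> i = ((0, 1), (1, 0))" "j \<in> vx_pow_supp n"
  shows "tadd_mod N i j \<in> vx_pow_supp (Suc n)"
    and "tadd_mod N i j = ((0, 0), (0, Suc n)) \<Longrightarrow> i = ((0, 0), (0, 1)) \<and> j = ((0, 0), (0, n))"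
proof -
  obtain l where l: "l \<le> n" "j = ((0, l), (l, n - l))"
    using assms(3) unfolding vx_pow_supp_def by blast
  have "tadd_mod N i j = ((0, l), (l, Suc n - l)) \<or> tadd_mod N i j = ((0, Suc l), (Suc l, Suc n - Suc l))"
    using assms(1,2) l by (auto simp: tadd_mod_def add_mod_def Suc_diff_le)
  then show "tadd_mod N i j \<in> vx_pow_supp (Suc n)"
    using l(1) unfolding vx_pow_supp_def by auto
  show "i = ((0, 0), (0, 1)) \<and> j = ((0, 0), (0, n))" if "tadd_mod N i j = ((0, 0), (0, Suc n))"
    using assms(1,2) l that by (auto simp: tadd_mod_def add_mod_def)
qed

lemma tpow_rho_vx:
  fixes q u a :: "'a::comm_ring_1"
  assumes "n < N"
  shows "tpow N q u a rho_vx n k \<noteq> 0 \<Longrightarrow> k \<in> vx_pow_supp n"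
    and "tpow N q u a rho_vx n ((0, 0), (0, n)) = 1"
proof -
  have "(\<forall>k. tpow N q u a rho_vx n k \<noteq> 0 \<longrightarrow> k \<in> vx_pow_supp n)
    \<and> tpow N q u a rho_vx n ((0, 0), (0, n)) = 1"
    using assms
  proof (induction n)
    case 0
    then show ?case by (simp add: tunit_eq_tbas tbas_def vx_pow_supp_def)
  next
    case (Suc n)
    define Y where "Y = tpow N q u a rho_vx n"
    have Y: "\<And>j. Y j \<noteq> 0 \<Longrightarrow> j \<in> vx_pow_supp n" "Y ((0, 0), (0, n)) = 1"
      using Suc unfolding Y_def by auto
    have "k \<in> vx_pow_supp (Suc n)" if nz: "tmult N q u a rho_vx Y k \<noteq> 0" for k
    proof -
      obtain i j where "rho_vx i \<noteq> (0::'a)" "Y j \<noteq> 0" "k = tadd_mod N i j"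
        using tmult_support[OF nz] by blast
      then show ?thesis
        using rho_vx_nonzero Y(1) tadd_mod_vx_pow_supp(1)[OF Suc.prems] by blast
    qed
    moreover have "tmult N q u a rho_vx Y ((0, 0), (0, Suc n)) =
        rho_vx ((0, 0), (0, 1)) * Y ((0, 0), (0, n))
        * mtab N q u a (0, 0) (0, 0) (0, 0) * mtab N q 1 0 (0, 1) (0, n) (0, Suc n)"
    proof (rule tmult_single_term)
      fix i j
      assume "rho_vx i \<noteq> (0::'a)" "Y j \<noteq> 0" "tadd_mod N i j = ((0, 0), (0, Suc n))"
      then show "i = ((0, 0), (0, 1)) \<and> j = ((0, 0), (0, n))"
        using rho_vx_nonzero Y(1) tadd_mod_vx_pow_supp(2)[OF Suc.prems] by blast
    qed (use Suc.prems in \<open>simp_all add: box_def\<close>)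
    moreover have "rho_vx ((0, 0), (0, 1)) = (1::'a)"
      by (simp add: rho_vx_def tens_bas tbas_def)
    ultimately show ?case
      using Suc.prems by (simp add: tpow_Suc Y_def[symmetric] Y(2) mtab_no_wrap)
  qed
  then show "tpow N q u a rho_vx n k \<noteq> 0 \<Longrightarrow> k \<in> vx_pow_supp n"
    and "tpow N q u a rho_vx n ((0, 0), (0, n)) = 1" by blast+
qed

lemma tpow_rho_vx_indep:
  fixes q u a :: "'a::comm_ring_1"
  assumes "n < N"
  shows "tpow N q u a rho_vx n = tpow N q 1 0 rho_vx n"
  using assms
proof (induction n)
  case 0
  then show ?case by simp
next
  case (Suc n)
  have "tmult N q u a rho_vx (tpow N q 1 0 rho_vx n) = tmult N q 1 0 rho_vx (tpow N q 1 0 rho_vx n)"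
  proof (rule tmult_indep_no_wrap)
    fix i j
    assume "rho_vx i \<noteq> (0::'a)" "tpow N q 1 0 rho_vx n j \<noteq> 0"
    then have "i = ((0, 0), (0, 1)) \<or> i = ((0, 1), (1, 0))" "j \<in> vx_pow_supp n"
      using rho_vx_nonzero tpow_rho_vx(1)[OF Suc_lessD[OF Suc.prems], of q 1 0 j] by blast+
    then show "fst (fst i) + fst (fst j) < N \<and> snd (fst i) + snd (fst j) < N"
      using Suc.prems by (auto simp: vx_pow_supp_def)
  qed
  then show ?case using Suc by (simp add: tpow_Suc)
qed

lemma rho_bas:
  assumes "(m, n) \<in> box N"
  shows "rho N q u a (bas (m, n)) = tmult N q u a (tbas ((m, 0), (m, 0))) (tpow N q u a rho_vx n)"
proof -
  have "rho N q u a (bas (m, n)) = (\<lambda>k. \<Sum>h\<in>box N. if h = (m, n)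
      then tmult N q u a (tpow N q u a rho_vg (fst h)) (tpow N q u a rho_vx (snd h)) k else 0)"
    unfolding rho_eq_tmult_tpow by (intro ext sum.cong) (simp_all add: bas_def)
  also have "\<dots> = tmult N q u a (tpow N q u a rho_vg m) (tpow N q u a rho_vx n)"
    using assms by simp
  finally have "rho N q u a (bas (m, n)) = tmult N q u a (tpow N q u a rho_vg m) (tpow N q u a rho_vx n)" .
  then show ?thesis
    using assms by (simp add: tpow_rho_vg box_def)
qed

lemma rho_bas_eq_Delta:
  fixes q u a :: "'a::comm_ring_1"
  assumes "h \<in> box N"
  shows "rho N q u a (bas h) = Delta N q (bas h)"
proof -
  obtain m n where h: "h = (m, n)" "m < N" "n < N"
    using assms by (auto simp: box_def)
  have "tmult N q u a (tbas ((m, 0), (m, 0))) (tpow N q 1 0 rho_vx n)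
      = tmult N q 1 0 (tbas ((m, 0), (m, 0))) (tpow N q 1 0 rho_vx n)"
  proof (rule tmult_indep_no_wrap)
    fix i j
    assume i: "tbas ((m, 0), (m, 0)) i \<noteq> (0::'a)" and j: "tpow N q 1 0 rho_vx n j \<noteq> 0"
    have "i = ((m, 0), (m, 0))"
      using i by (simp add: tbas_def split: if_splits)
    moreover have "j \<in> vx_pow_supp n"
      using tpow_rho_vx(1)[OF h(3) j] .
    ultimately show "fst (fst i) + fst (fst j) < N \<and> snd (fst i) + snd (fst j) < N"
      using h by (auto simp: vx_pow_supp_def)
  qed
  then show ?thesis
    unfolding Delta_def h(1) rho_bas[OF assms[unfolded h(1)]] tpow_rho_vx_indep[OF h(3), of q u a] .
qed

lemma tmult_vg_pow_vx_pow_coeff: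
  assumes "m < N" "n < N" "m' < N" "n' < N"
  shows "tmult N q u a (tbas ((m, 0), (m, 0))) (tpow N q u a rho_vx n) ((m', 0), (m', n'))
    = (if (m, n) = (m', n') then 1 else 0)"
proof -
  have unique: "i = ((m, 0), (m, 0)) \<and> j = ((0, 0), (0, n)) \<and> (m, n) = (m', n')"
    if i: "tbas ((m, 0), (m, 0)) i \<noteq> (0::'a)" and j: "tpow N q u a rho_vx n j \<noteq> 0"
      and k: "tadd_mod N i j = ((m', 0), (m', n'))" for i j
  proof -
    obtain l where "l \<le> n" "j = ((0, l), (l, n - l))"
      using tpow_rho_vx(1)[OF assms(2) j] unfolding vx_pow_supp_def by blast
    moreover have "i = ((m, 0), (m, 0))"
      using i by (simp add: tbas_def split: if_splits)
    ultimately show ?thesis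
      using assms k by (auto simp: tadd_mod_def add_mod_def)
  qed
  show ?thesis
  proof (cases "(m, n) = (m', n')")
    case True
    have "tmult N q u a (tbas ((m, 0), (m, 0))) (tpow N q u a rho_vx n) ((m', 0), (m', n'))
      = tbas ((m, 0), (m, 0)) ((m, 0), (m, 0)) * tpow N q u a rho_vx n ((0, 0), (0, n))
        * mtab N q u a (m, 0) (0, 0) (m', 0) * mtab N q 1 0 (m, 0) (0, n) (m', n')"
      using unique assms by (intro tmult_single_term) (auto simp: box_def)
    then show ?thesis
      using True assms by (simp add: tbas_def tpow_rho_vx(2) mtab_no_wrap)
  next
    case False
    then show ?thesis
      using unique tmult_support by (metis (no_types, lifting))
  qed
qed

lemma rho_coeff:
  assumes "(m, n) \<in> box N"
  shows "rho N q u a b ((m, 0), (m, n)) = b (m, n)"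
proof -
  have "rho N q u a b ((m, 0), (m, n)) = (\<Sum>h\<in>box N. if h = (m, n) then b h else 0)"
    unfolding rho_eq_tmult_tpow
  proof (rule sum.cong)
    fix h assume "h \<in> box N"
    then show "b h * tmult N q u a (tpow N q u a rho_vg (fst h)) (tpow N q u a rho_vx (snd h)) ((m, 0), (m, n))
        = (if h = (m, n) then b h else 0)"
      using assms
      by (cases h) (auto simp: box_def tpow_rho_vg tmult_vg_pow_vx_pow_coeff)
  qed simp
  then show ?thesis using assms by simp
qed

lemma Delta_bas_g:
  assumes "N \<ge> 2"
  shows "Delta N q (bas (1, 0)) = tbas ((1, 0), (1, 0))"
  using assms
  by (simp add: Delta_def rho_bas box_def tunit_eq_tbas tmult_tbas)

section \<open>Comodule algebra maps and the identity Q((Z_1^g)^N)\<close>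

lemma comod_alg_map_vg:
  assumes "N \<ge> 2" and phi: "phi \<in> comod_alg_maps N q u a" and "i \<ge> 1"
  shows "phi i (1, 0) = (\<lambda>k. phi i (1, 0) (1, 0) * bas (1, 0) k)"
proof
  fix k :: "nat \<times> nat"
  define b where "b = phi i (1, 0)"
  have "(1, 0) \<in> box N" using assms(1) by (simp add: box_def)
  then have b: "b \<in> bvec N"
    and colinear: "rho N q u a b = (\<lambda>(k1, k2). \<Sum>j\<in>box N. Delta N q (bas (1, 0)) (j, k2) * phi i j k1)"
    using phi assms(3) unfolding comod_alg_maps_def b_def by auto
  have "b (m, n) = 0" if "(m, n) \<in> box N" "(m, n) \<noteq> (1, 0)" for m n
  proof -
    have "b (m, n) = rho N q u a b ((m, 0), (m, n))"
      using that(1) by (simp add: rho_coeff)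
    also have "\<dots> = 0"
      using that(2) unfolding colinear Delta_bas_g[OF assms(1)] by (auto simp: tbas_def intro!: sum.neutral)
    finally show ?thesis .
  qed
  with b have "b k = 0" if "k \<noteq> (1, 0)"
    using that unfolding bvec_def by (cases k) blast
  then show "phi i (1, 0) k = phi i (1, 0) (1, 0) * bas (1, 0) k"
    by (cases "k = (1, 0)") (simp_all add: bas_def b_def)
qed

lemma rho_scale: "rho N q u a (\<lambda>k. c * b k) = (\<lambda>k. c * rho N q u a b k)"
  unfolding rho_def by (simp add: sum_distrib_left mult.assoc)

lemma scaled_bas_comod_alg_map: "(\<lambda>i h k. c * bas h k) \<in> comod_alg_maps N q u a"
  unfolding comod_alg_maps_def
proof (intro CollectI allI impI ballI conjI)
  fix i :: nat and h assume h: "h \<in> box N"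
  then show "(\<lambda>k. c * bas h k) \<in> bvec N" by (auto simp: bvec_def bas_def)
  show "rho N q u a (\<lambda>k. c * bas h k)
      = (\<lambda>(k1, k2). \<Sum>j\<in>box N. Delta N q (bas h) (j, k2) * (c * bas j k1))"
  proof (intro ext, clarify)
    fix k1 k2
    obtain m n where mn: "h = (m, n)" by (cases h)
    have "(\<Sum>j\<in>box N. Delta N q (bas h) (j, k2) * bas j k1)
        = (if k1 \<in> box N then Delta N q (bas h) (k1, k2) else 0)"
      by (simp add: bas_def if_distrib cong: if_cong)
    also have "\<dots> = Delta N q (bas h) (k1, k2)"
      using h unfolding Delta_def mn by (simp add: rho_bas tmult_outside)
    finally have "(\<Sum>j\<in>box N. Delta N q (bas h) (j, k2) * bas j k1) = rho N q u a (bas h) (k1, k2)"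
      using h by (simp add: rho_bas_eq_Delta)
    moreover have "(\<Sum>j\<in>box N. Delta N q (bas h) (j, k2) * (c * bas j k1))
        = c * (\<Sum>j\<in>box N. Delta N q (bas h) (j, k2) * bas j k1)"
      by (simp add: sum_distrib_left mult.left_commute)
    ultimately show "rho N q u a (\<lambda>k. c * bas h k) (k1, k2)
        = (\<Sum>j\<in>box N. Delta N q (bas h) (j, k2) * (c * bas j k1))"
      by (simp add: rho_scale)
  qed
qed

lemma bmult_scaled_bas:
  assumes "p \<in> box N" "p' \<in> box N"
  shows "bmult N q u a (\<lambda>k. c * bas p k) (\<lambda>k. d * bas p' k) =
    (\<lambda>k. if k \<in> box N then c * d * mtab N q u a p p' k else 0)"
proof -
  have "c * bas p i * (d * bas p' j) * mtab N q u a i j k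
      = (if j = p' then if i = p then c * d * mtab N q u a p p' k else 0 else 0)" for i j k
    by (simp add: bas_def)
  note single = this
  show ?thesis
    using assms unfolding bmult_def single by (simp add: fun_eq_iff)
qed

lemma bmult_vg_power:
  assumes "N \<ge> 2"
  shows "(bmult N q u a (\<lambda>k. c * bas (1, 0) k) ^^ n) bunit = (\<lambda>k. c ^ n * u ^ (n div N) * bas (n mod N, 0) k)"
proof (induction n)
  case 0
  then show ?case by (simp add: bunit_def)
next
  case (Suc n)
  have "n mod N < N" using assms by simp
  then have box: "(1, 0) \<in> box N" "(n mod N, 0) \<in> box N" "(Suc n mod N, 0) \<in> box N"
    using assms by (simp_all add: box_def)
  have "(bmult N q u a (\<lambda>k. c * bas (1, 0) k) ^^ Suc n) bunit
      = bmult N q u a (\<lambda>k. c * bas (1, 0) k) (\<lambda>k. (c ^ n * u ^ (n div N)) * bas (n mod N, 0) k)"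
    by (simp only: funpow.simps comp_apply Suc.IH)
  also have "\<dots> = (\<lambda>k. if k \<in> box N
      then c * (c ^ n * u ^ (n div N)) * mtab N q u a (1, 0) (n mod N, 0) k else 0)"
    by (rule bmult_scaled_bas[OF box(1,2)])
  also have "\<dots> = (\<lambda>k. c ^ Suc n * u ^ (Suc n div N) * bas (Suc n mod N, 0) k)"
  proof
    fix k
    show "(if k \<in> box N then c * (c ^ n * u ^ (n div N)) * mtab N q u a (1, 0) (n mod N, 0) k else 0)
        = c ^ Suc n * u ^ (Suc n div N) * bas (Suc n mod N, 0) k"
      using assms box(3) \<open>n mod N < N\<close> unfolding mtab_def bas_def
      by (cases "Suc (n mod N) = N") (auto simp: mod_Suc div_Suc)
  qed
  finally show ?case .
qed

text \<open>The element Q((Z_1^g)^N) of T: the word (Z_1^g)^(jN) has coefficient coeff Q j.\<close>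
definition Zg_pow_poly :: "'a::comm_ring_1 poly \<Rightarrow> nat \<Rightarrow> (nat \<times> (nat \<times> nat)) list \<Rightarrow> 'a" where
  "Zg_pow_poly Q N w =
    (if (\<forall>l\<in>set w. l = (1, (1, 0))) \<and> N dvd length w then coeff Q (length w div N) else 0)"

lemma Zg_pow_poly_support:
  assumes "N > 0"
  shows "{w. Zg_pow_poly Q N w \<noteq> 0} = (\<lambda>j. replicate (j * N) (1, (1, 0))) ` {j. coeff Q j \<noteq> 0}"
proof (intro equalityI subsetI)
  fix w :: "(nat \<times> (nat \<times> nat)) list"
  assume "w \<in> {w. Zg_pow_poly Q N w \<noteq> 0}"
  then have w: "\<forall>l\<in>set w. l = (1, (1, 0))" "N dvd length w" "coeff Q (length w div N) \<noteq> 0"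
    unfolding Zg_pow_poly_def by (auto split: if_splits)
  have "w = replicate (length w div N * N) (1, (1, 0))"
    using w(1,2) by (simp add: replicate_length_same)
  then show "w \<in> (\<lambda>j. replicate (j * N) (1, (1, 0))) ` {j. coeff Q j \<noteq> 0}"
    using w(3) by blast
qed (use assms in \<open>auto simp: Zg_pow_poly_def\<close>)

lemma Zg_pow_poly_in_tpoly:
  assumes "N \<ge> 2"
  shows "Zg_pow_poly Q N \<in> tpoly N"
proof -
  have "finite {j. coeff Q j \<noteq> 0}"
    by (rule finite_subset[of _ "{..degree Q}"]) (auto intro: le_degree)
  then have "finite {w. Zg_pow_poly Q N w \<noteq> 0}"
    using assms by (simp add: Zg_pow_poly_support)
  moreover have "1 \<le> fst l \<and> snd l \<in> box N" if "Zg_pow_poly Q N w \<noteq> 0" "l \<in> set w" for w l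
    using assms that by (auto simp: Zg_pow_poly_def box_def split: if_splits)
  ultimately show ?thesis unfolding tpoly_def by blast
qed

lemma teval_Zg_pow_poly:
  fixes c :: "'a::comm_ring_1"
  assumes "N \<ge> 2" and phi: "phi 1 (1, 0) = (\<lambda>k. c * bas (1, 0) k)"
  shows "teval N q u a phi (Zg_pow_poly Q N) = (\<lambda>k. poly Q (c ^ N * u) * bunit k)"
proof
  fix k
  define J where "J = {j. coeff Q j \<noteq> 0}"
  have N: "N > 0" using assms(1) by simp
  have inj: "inj_on (\<lambda>j. replicate (j * N) (1::nat, (1::nat, 0::nat))) J"
    using N by (auto simp: inj_on_def dest: arg_cong[of _ _ length])
  have word: "foldr (\<lambda>l acc. bmult N q u a (phi (fst l) (snd l)) acc) (replicate (j * N) (1, (1, 0))) bunit k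
      = (c ^ N * u) ^ j * bunit k" for j
    unfolding foldr_replicate prod.sel phi bmult_vg_power[OF assms(1)]
    using N by (simp add: bunit_def power_mult power_mult_distrib mult.commute)
  have "teval N q u a phi (Zg_pow_poly Q N) k = (\<Sum>j\<in>J. Zg_pow_poly Q N (replicate (j * N) (1, (1, 0)))
      * foldr (\<lambda>l acc. bmult N q u a (phi (fst l) (snd l)) acc) (replicate (j * N) (1, (1, 0))) bunit k)"
    unfolding teval_def Zg_pow_poly_support[OF N] J_def[symmetric] sum.reindex[OF inj] comp_def ..
  also have "\<dots> = (\<Sum>j\<in>J. coeff Q j * ((c ^ N * u) ^ j * bunit k))"
    unfolding word using N by (simp add: Zg_pow_poly_def)
  also have "\<dots> = (\<Sum>j\<in>J. coeff Q j * (c ^ N * u) ^ j) * bunit k"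
    by (simp add: sum_distrib_right mult.assoc)
  also have "(\<Sum>j\<in>J. coeff Q j * (c ^ N * u) ^ j) = poly Q (c ^ N * u)"
    unfolding poly_altdef by (intro sum.mono_neutral_left) (auto simp: J_def le_degree)
  finally show "teval N q u a phi (Zg_pow_poly Q N) k = poly Q (c ^ N * u) * bunit k" .
qed

lemma Zg_pow_poly_identity_iff:
  assumes "N \<ge> 2"
  shows "Zg_pow_poly Q N \<in> poly_H_identities N q u a \<longleftrightarrow> (\<forall>c. poly Q (c ^ N * u) = 0)"
proof
  assume "Zg_pow_poly Q N \<in> poly_H_identities N q u a"
  then have "teval N q u a (\<lambda>i h k. c * bas h k) (Zg_pow_poly Q N) = (\<lambda>_. 0)" for c
    using scaled_bas_comod_alg_map unfolding poly_H_identities_def by blast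
  then have "poly Q (c ^ N * u) * bunit (0, 0) = 0" for c
    using teval_Zg_pow_poly[OF assms, of "\<lambda>i h k. c * bas h k" c] by (metis (mono_tags))
  then show "\<forall>c. poly Q (c ^ N * u) = 0" by (simp add: bunit_def bas_def)
next
  assume roots: "\<forall>c. poly Q (c ^ N * u) = 0"
  have "teval N q u a phi (Zg_pow_poly Q N) = (\<lambda>_. 0)" if "phi \<in> comod_alg_maps N q u a" for phi
    using teval_Zg_pow_poly[where phi = phi and c = "phi 1 (1, 0) (1, 0)", OF assms comod_alg_map_vg[OF assms that le_refl]] roots
    by simp
  then show "Zg_pow_poly Q N \<in> poly_H_identities N q u a"
    unfolding poly_H_identities_def using Zg_pow_poly_in_tpoly[OF assms] by blast
qed

theorem proposition3p9:
  fixes q u u' a a' :: "'a::{comm_ring_1,finite}" and N :: nat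
  assumes "N \<ge> 2"
    and "(of_nat N :: 'a) dvd 1"
    and "poly (map_poly of_int (cyclotomic_poly N)) q = 0"
    and "u dvd 1" and "u' dvd 1"
    and "poly_H_identities N q u a = poly_H_identities N q u' a'"
  shows "\<exists>s. s dvd 1 \<and> u' = s ^ N * u"
proof -
  define Q where "Q = (\<Prod>r\<in>UNIV. [:- (r ^ N * u), 1:])"
  have poly_Q: "poly Q x = (\<Prod>r\<in>UNIV. x - r ^ N * u)" for x
    unfolding Q_def poly_prod by simp
  have "poly Q (c ^ N * u) = 0" for c
    unfolding poly_Q by (rule prod_zero) auto
  then have "Zg_pow_poly Q N \<in> poly_H_identities N q u' a'"
    using Zg_pow_poly_identity_iff[OF assms(1)] assms(6) by blast
  then have "poly Q (1 ^ N * u') = 0"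
    using Zg_pow_poly_identity_iff[OF assms(1)] by blast
  then have "(\<Prod>r\<in>UNIV. u' - r ^ N * u) = 0"
    by (simp add: poly_Q)
  then show ?thesis
    by (rule nth_power_coset_if_prod_vanishes[OF assms(2,5)])
qed

end
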